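(* Let $d\ge2$ be an integer, $\beta>0$, and let $v\in C^1((0,+\infty),\mathbb{R})$ satisfy \[ \limsup_{r\to0}v'(r)<+\infty\quad\text{and}\quad\frac{v'(r)}{r}\xrightarrow[r\to+\infty]{}+\infty. \] Set $v_*(r)=v(r)-\frac{d-1}{\beta}\ln r$, $\pi_*(dr)=Z_*^{-1}e^{-\beta v_*(r)}dr$ on $(0,+\infty)$ and $r_*=\int_0^\infty r\,\pi_*(dr)$. Then the equation \[ \beta^{-1}\varphi'(r) = r_* - r + v_*'(r)\varphi(r),\qquad r>0, \] admits a unique solution $\varphi\in\mathrm{L}^2(\pi_* )$ whose primitives belong to $\mathrm{L}^2(\pi_* )$. Moreover this solution extends continuously to $[0,+\infty)$ with $\varphi(0)=0$, and $\varphi(r)\to0$ as $r\to+\infty$. *)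

theory Defs
  imports "HOL-Analysis.Analysis" "HOL-Probability.Probability"
begin

definition vstar :: "real \<Rightarrow> nat \<Rightarrow> (real \<Rightarrow> real) \<Rightarrow> real \<Rightarrow> real" where
  "vstar \<beta> d v r = v r - (real d - 1) / \<beta> * ln r"

definition Zstar :: "real \<Rightarrow> nat \<Rightarrow> (real \<Rightarrow> real) \<Rightarrow> real" where
  "Zstar \<beta> d v = (LINT r:{0<..}|lborel. exp (- \<beta> * vstar \<beta> d v r))"

definition pistar :: "real \<Rightarrow> nat \<Rightarrow> (real \<Rightarrow> real) \<Rightarrow> real measure" where
  "pistar \<beta> d v = density lborel
     (\<lambda>r. ennreal (indicator {0<..} r * exp (- \<beta> * vstar \<beta> d v r) / Zstar \<beta> d v))"

definition rstar :: "real \<Rightarrow> nat \<Rightarrow> (real \<Rightarrow> real) \<Rightarrow> real" where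
  "rstar \<beta> d v = integral\<^sup>L (pistar \<beta> d v) (\<lambda>r. r)"

definition L2pistar :: "real \<Rightarrow> nat \<Rightarrow> (real \<Rightarrow> real) \<Rightarrow> (real \<Rightarrow> real) \<Rightarrow> bool" where
  "L2pistar \<beta> d v f \<longleftrightarrow> set_integrable (pistar \<beta> d v) {0<..} (\<lambda>r. (f r)\<^sup>2)"

text \<open>Classical solution on (0,inf) of beta^{-1} phi' = r_* - r + v_*' phi, with v_*'(r) = v'(r) - (d-1)/(beta r)\<close>
definition is_solution :: "real \<Rightarrow> nat \<Rightarrow> (real \<Rightarrow> real) \<Rightarrow> (real \<Rightarrow> real) \<Rightarrow> (real \<Rightarrow> real) \<Rightarrow> bool" where
  "is_solution \<beta> d v v' \<phi> \<longleftrightarrow>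
     (\<forall>r>0. \<phi> differentiable (at r) \<and>
        deriv \<phi> r / \<beta> = rstar \<beta> d v - r + (v' r - (real d - 1) / (\<beta> * r)) * \<phi> r)"

end

theory Submission
  imports Defs
begin

text \<open>
  Let \<open>g = exp (- \<beta> v\<^sub>*)\<close> be the unnormalised density of \<open>\<pi>\<^sub>*\<close>. As \<open>g' = - \<beta> v\<^sub>*' g\<close>, the
  equation says \<open>(g \<phi>)' = \<beta> (r\<^sub>* - r) g\<close>, so its solutions are \<open>\<phi> + c / g\<close>, where
  \<open>\<phi> = \<beta> Q / g\<close> and \<open>Q r = \<integral>\<^sub>0\<^sup>r (r\<^sub>* - s) g s ds\<close> (\<open>gibbs\<close>, \<open>centred_gibbs_integral\<close> below).
  Near \<open>0\<close>, \<open>v'\<close> is bounded above and \<open>d \<ge> 2\<close>, so \<open>g s \<le> E (s / r) g r\<close> for \<open>s \<le> r\<close> small.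
  Hence \<open>\<integral> g (c / g)\<^sup>2 = c\<^sup>2 \<integral> 1 / g\<close> diverges like \<open>\<integral> 1 / s\<close> unless \<open>c = 0\<close> (uniqueness), and
  \<open>|Q r| \<le> C r g r\<close>, i.e. \<open>\<phi> r = O(r)\<close>.
  Near \<open>\<infinity>\<close>, for every \<open>K\<close> eventually \<open>v\<^sub>*' \<ge> K r\<close>, so \<open>g s \<le> g r exp (- \<beta> K r (s - r))\<close> for
  \<open>s \<ge> r\<close>; the choice of \<open>r\<^sub>*\<close> makes \<open>Q\<close> vanish at \<open>\<infinity>\<close>, so \<open>Q r = - \<integral>\<^sub>r\<^sup>\<infinity> (r\<^sub>* - s) g s ds\<close>,
  which gives \<open>|\<phi> r| \<le> C / K\<close>. Thus \<open>\<phi>\<close> is bounded, its primitives grow at most linearly,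
  and both are square integrable since \<open>\<pi>\<^sub>*\<close> has a finite second moment.
\<close>

lemma continuous_bounded_by_integrable:
  fixes f G :: "real \<Rightarrow> real"
  assumes "continuous_on S f" "S \<in> sets lebesgue" "G integrable_on S"
    and "\<And>x. x \<in> S \<Longrightarrow> \<bar>f x\<bar> \<le> G x"
  shows "f integrable_on S" "f absolutely_integrable_on S"
proof -
  have m: "f \<in> borel_measurable (lebesgue_on S)"
    by (rule continuous_imp_measurable_on_sets_lebesgue) (use assms in auto)
  show "f integrable_on S"
    by (rule measurable_bounded_by_integrable_imp_integrable[OF m assms(3)]) (use assms in auto)
  show "f absolutely_integrable_on S"
    by (rule measurable_bounded_by_integrable_imp_absolutely_integrable[OF m assms(2,3)])
      (use assms in auto)
qed

lemma set_integrable_lborel_iff_absolutely_integrable_on: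
  fixes f :: "real \<Rightarrow> real"
  assumes "S \<in> sets borel" "continuous_on S f"
  shows "set_integrable lborel S f \<longleftrightarrow> f absolutely_integrable_on S"
proof -
  have "(\<lambda>x. indicator S x *\<^sub>R f x) \<in> borel_measurable borel"
    by (rule borel_measurable_continuous_on_indicator) (use assms in auto)
  then show ?thesis
    unfolding set_integrable_def
    using integrable_completion[of "\<lambda>x. indicator S x *\<^sub>R f x" lborel] by simp
qed

lemma has_integral_const_Ioc:
  "a \<le> b \<Longrightarrow> ((\<lambda>_. c::real) has_integral (b - a) * c) {a<..b}"
proof -
  assume ab: "a \<le> b"
  have N1: "negligible {x \<in> {a<..b} - {a..b}. c \<noteq> 0}"
    by (rule negligible_subset[of "{}"]) auto
  have N2: "negligible {x \<in> {a..b} - {a<..b}. c \<noteq> 0}"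
    by (rule negligible_subset[of "{a}"]) auto
  show ?thesis
    using has_integral_spike_set_eq[OF N1 N2] has_integral_const_real[of c a b] ab by simp
qed

lemma has_integral_exp_decay:
  fixes b r :: real assumes "b > 0"
  shows "((\<lambda>s. exp (- b * (s - r))) has_integral 1 / b) {r..}"
proof -
  have "((\<lambda>s. exp (b * r) * exp (- b * s)) has_integral exp (b * r) * (exp (- b * r) / b)) {r..}"
    by (rule has_integral_mult_right) (rule has_integral_exp_minus_to_infinity[OF assms])
  moreover have "(\<lambda>s. exp (b * r) * exp (- b * s)) = (\<lambda>s. exp (- b * (s - r)))"
    by (simp add: fun_eq_iff exp_add[symmetric] algebra_simps)
  moreover have "exp (b * r) * (exp (- b * r) / b) = 1 / b"
    by (simp add: exp_add[symmetric])
  ultimately show ?thesis by metis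
qed

lemma mult_exp_neg_le:
  fixes a t :: real assumes "a > 0"
  shows "t * exp (- a * t) \<le> 2 / a * exp (- (a / 2) * t)"
proof -
  have "a / 2 * t \<le> exp (a / 2 * t)"
    using exp_ge_add_one_self[of "a / 2 * t"] by linarith
  then have "t \<le> 2 / a * exp (a / 2 * t)" using assms by (simp add: field_simps)
  then have "t * exp (- a * t) \<le> (2 / a * exp (a / 2 * t)) * exp (- a * t)"
    by (intro mult_right_mono) auto
  also have "\<dots> = 2 / a * exp (- (a / 2) * t)"
    by (simp add: mult.assoc exp_add[symmetric] algebra_simps)
  finally show ?thesis .
qed

lemma le_one_plus_square: "(s::real) \<le> 1 + s\<^sup>2"
proof -
  have "0 \<le> (s - 1)\<^sup>2 + s\<^sup>2" by simp
  then show ?thesis by (simp add: power2_eq_square algebra_simps)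
qed

lemma one_plus_square_le_exp:
  fixes R t :: real assumes "R \<ge> 1" "t \<ge> 0"
  shows "1 + (R + t)\<^sup>2 \<le> 4 * (1 + R\<^sup>2) * exp t"
proof -
  have "(1 + t / 2)\<^sup>2 \<le> (exp (t / 2))\<^sup>2"
    using exp_ge_add_one_self[of "t / 2"] assms by (intro power_mono) auto
  also have "\<dots> = exp t" by (simp add: power2_eq_square exp_add[symmetric])
  finally have "(1 + t / 2)\<^sup>2 \<le> exp t" .
  moreover have "(1 + t)\<^sup>2 \<le> 4 * (1 + t / 2)\<^sup>2"
    using power_mono[of "1 + t" "2 + t" 2] assms by (simp add: power2_eq_square algebra_simps)
  ultimately have exp_bound: "(1 + t)\<^sup>2 \<le> 4 * exp t" by linarith
  have "R \<le> R * R" using assms by simp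
  then have "0 \<le> 1 + R * R - R" by linarith
  then have "0 \<le> 2 * t * (1 + R * R - R) + t * t * (R * R)"
    using assms by (intro add_nonneg_nonneg mult_nonneg_nonneg) auto
  then have "1 + (R + t)\<^sup>2 \<le> (1 + R\<^sup>2) * (1 + t)\<^sup>2"
    by (simp add: power2_eq_square algebra_simps)
  also have "\<dots> \<le> (1 + R\<^sup>2) * (4 * exp t)" using exp_bound by (intro mult_left_mono) auto
  finally show ?thesis by (simp add: algebra_simps)
qed

lemma inverse_not_integrable_at_0:
  fixes r0 :: real assumes r0: "r0 > 0"
  shows "\<not> (\<lambda>s. 1 / s) integrable_on {0<..r0}"
proof
  assume int: "(\<lambda>s. 1 / s) integrable_on {0<..r0}"
  define I where "I = integral {0<..r0} (\<lambda>s. 1 / s)"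
  define \<epsilon> where "\<epsilon> = min r0 (exp (ln r0 - I - 1))"
  have \<epsilon>: "0 < \<epsilon>" "\<epsilon> \<le> r0" unfolding \<epsilon>_def using r0 by auto
  have "\<epsilon> \<le> exp (ln r0 - I - 1)" unfolding \<epsilon>_def by simp
  then have "ln \<epsilon> \<le> ln (exp (ln r0 - I - 1))" using \<epsilon>(1) by (rule ln_mono)
  then have "ln \<epsilon> \<le> ln r0 - I - 1" by simp
  have ftc: "((\<lambda>s. 1 / s) has_integral (ln r0 - ln \<epsilon>)) {\<epsilon>..r0}"
  proof (rule fundamental_theorem_of_calculus[OF \<epsilon>(2)])
    fix x assume "x \<in> {\<epsilon>..r0}"
    then have "x > 0" using \<epsilon> by auto
    then have "(ln has_real_derivative inverse x) (at x within {\<epsilon>..r0})"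
      by (rule has_field_derivative_at_within[OF DERIV_ln])
    then show "(ln has_vector_derivative 1 / x) (at x within {\<epsilon>..r0})"
      unfolding has_real_derivative_iff_has_vector_derivative[symmetric]
      by (simp add: divide_inverse)
  qed
  have "ln r0 - ln \<epsilon> = integral {\<epsilon>..r0} (\<lambda>s. 1 / s)" using ftc by (simp add: integral_unique)
  also have "\<dots> \<le> I"
    unfolding I_def
  proof (rule integral_subset_le)
    show "{\<epsilon>..r0} \<subseteq> {0<..r0}" using \<epsilon> by auto
    show "(\<lambda>s. 1 / s) integrable_on {\<epsilon>..r0}" using has_integral_integrable[OF ftc] .
  qed (use int in simp_all)
  finally show False using \<open>ln \<epsilon> \<le> ln r0 - I - 1\<close> by linarith
qed

lemma bounded_if_tendsto_at_right_0_and_at_top: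
  fixes f :: "real \<Rightarrow> real"
  assumes "continuous_on {0<..} f" "(f \<longlongrightarrow> a) (at_right 0)" "(f \<longlongrightarrow> b) at_top"
  shows "\<exists>B. \<forall>r>0. \<bar>f r\<bar> \<le> B"
proof -
  obtain \<delta> where \<delta>: "\<delta> > 0" "\<And>y. y > 0 \<Longrightarrow> y < \<delta> \<Longrightarrow> \<bar>f y - a\<bar> < 1"
    using tendstoD[OF assms(2) zero_less_one]
    unfolding eventually_at_right[OF zero_less_one] by (auto simp: dist_real_def)
  obtain N where N: "\<And>x. x \<ge> N \<Longrightarrow> \<bar>f x - b\<bar> < 1"
    using tendstoD[OF assms(3) zero_less_one]
    unfolding eventually_at_top_linorder by (auto simp: dist_real_def)
  have "continuous_on {\<delta>..max N \<delta>} (\<lambda>r. \<bar>f r\<bar>)"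
    by (intro continuous_on_rabs continuous_on_subset[OF assms(1)]) (use \<delta> in auto)
  then obtain x where x: "\<And>y. y \<in> {\<delta>..max N \<delta>} \<Longrightarrow> \<bar>f y\<bar> \<le> \<bar>f x\<bar>"
    using continuous_attains_sup[of "{\<delta>..max N \<delta>}" "\<lambda>r. \<bar>f r\<bar>"] \<delta> by fastforce
  have "\<bar>f r\<bar> \<le> \<bar>a\<bar> + \<bar>b\<bar> + 1 + \<bar>f x\<bar>" if r: "r > 0" for r
  proof -
    consider "r < \<delta>" | "r \<ge> N" | "r \<in> {\<delta>..max N \<delta>}" by force
    then show ?thesis
    proof cases
      case 1
      then show ?thesis using \<delta>(2)[OF r] by linarith
    next
      case 2
      then show ?thesis using N[of r] by linarith
    next
      case 3
      then show ?thesis using x[of r] by linarith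
    qed
  qed
  then show ?thesis by blast
qed

lemma sq_le_if_bounded_derivative:
  fixes P f :: "real \<Rightarrow> real"
  assumes "\<And>r. r > 0 \<Longrightarrow> (P has_real_derivative f r) (at r)" "\<And>r. r > 0 \<Longrightarrow> \<bar>f r\<bar> \<le> B"
  shows "\<exists>C. \<forall>s>0. (P s)\<^sup>2 \<le> C * (1 + s\<^sup>2)"
proof -
  have B: "B \<ge> 0" using assms(2)[of 1] by linarith
  define A where "A = \<bar>P 1\<bar> + B"
  have "(P s)\<^sup>2 \<le> (2 * A\<^sup>2 + 2 * B\<^sup>2) * (1 + s\<^sup>2)" if s: "s > 0" for s
  proof -
    have "norm (P s - P 1) \<le> B * norm (s - 1)"
      by (rule field_differentiable_bound[of "{0<..}" P f B])
        (use assms s in \<open>auto intro: has_field_derivative_at_within\<close>)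
    moreover have "B * \<bar>s - 1\<bar> \<le> B * (1 + s)"
      using s B by (intro mult_left_mono) auto
    ultimately have "\<bar>P s\<bar> \<le> A + B * s" unfolding A_def by (simp add: algebra_simps)
    then have "(P s)\<^sup>2 \<le> (A + B * s)\<^sup>2"
      using power_mono[of "\<bar>P s\<bar>" _ 2] by simp
    also have "\<dots> \<le> 2 * A\<^sup>2 + 2 * (B * s)\<^sup>2"
      using zero_le_power2[of "A - B * s"] by (simp add: power2_eq_square algebra_simps)
    also have "\<dots> \<le> (2 * A\<^sup>2 + 2 * B\<^sup>2) * (1 + s\<^sup>2)"
      by (simp add: algebra_simps power_mult_distrib)
    finally show ?thesis .
  qed
  then show ?thesis by blast
qed

locale confining_potential =
  fixes d :: nat and \<beta> :: real and v v' :: "real \<Rightarrow> real"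
  assumes d_ge_2: "d \<ge> 2" and beta_pos: "\<beta> > 0"
    and has_derivative_v: "\<And>r. r > 0 \<Longrightarrow> (v has_real_derivative v' r) (at r)"
    and v'_Limsup_at_0: "Limsup (at_right 0) (\<lambda>r. ereal (v' r)) < \<infinity>"
    and v'_superlinear: "filterlim (\<lambda>r. v' r / r) at_top at_top"
begin

abbreviation Z where "Z \<equiv> Zstar \<beta> d v"
abbreviation rs where "rs \<equiv> rstar \<beta> d v"

definition gibbs :: "real \<Rightarrow> real" where "gibbs r = exp (- \<beta> * vstar \<beta> d v r)"
definition dvstar :: "real \<Rightarrow> real" where "dvstar r = v' r - (real d - 1) / (\<beta> * r)"

lemma gibbs_pos: "gibbs r > 0"
  by (simp add: gibbs_def)

lemma has_derivative_vstar: "r > 0 \<Longrightarrow> (vstar \<beta> d v has_real_derivative dvstar r) (at r)"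
proof -
  assume r: "r > 0"
  have "((\<lambda>r. v r - (real d - 1) / \<beta> * ln r) has_real_derivative
      v' r - (real d - 1) / \<beta> * inverse r) (at r)"
    by (intro DERIV_diff DERIV_cmult has_derivative_v DERIV_ln r)
  moreover have "v' r - (real d - 1) / \<beta> * inverse r = dvstar r"
    using r beta_pos by (simp add: dvstar_def field_simps)
  moreover have "vstar \<beta> d v = (\<lambda>r. v r - (real d - 1) / \<beta> * ln r)"
    by (rule ext) (simp add: vstar_def)
  ultimately show ?thesis by metis
qed

lemma has_derivative_gibbs: "r > 0 \<Longrightarrow> (gibbs has_real_derivative (- \<beta> * dvstar r * gibbs r)) (at r)"
  unfolding gibbs_def[abs_def]
  using DERIV_fun_exp[OF DERIV_cmult[OF has_derivative_vstar, of r "- \<beta>"]]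
  by (simp add: algebra_simps)

lemma continuous_on_gibbs: "S \<subseteq> {0<..} \<Longrightarrow> continuous_on S gibbs"
  by (intro continuous_at_imp_continuous_on ballI DERIV_isCont[OF has_derivative_gibbs]) auto

lemma v'_bounded_above_near_0:
  obtains b M where "b > 0" "M \<ge> 0" "\<And>y. 0 < y \<Longrightarrow> y < b \<Longrightarrow> v' y \<le> M"
proof -
  obtain c :: real where c: "Limsup (at_right 0) (\<lambda>r. ereal (v' r)) < ereal c"
  proof (cases "Limsup (at_right 0) (\<lambda>r. ereal (v' r))")
    case (real r) then show ?thesis using that[of "r + 1"] by simp
  qed (use v'_Limsup_at_0 in auto)
  have "eventually (\<lambda>r. ereal (v' r) < ereal c) (at_right (0::real))"
    by (rule Limsup_lessD[OF c])
  then obtain b where "b > 0" "\<And>y. y > 0 \<Longrightarrow> y < b \<Longrightarrow> v' y < c"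
    unfolding eventually_at_right[OF zero_less_one] by auto
  then show ?thesis using that[of b "max c 0"] by fastforce
qed

text \<open>
  \<open>gibbs s / gibbs r = exp (\<beta> (v r - v s)) (s / r)\<^bsup>d - 1\<^esup>\<close>: the first factor is bounded
  because \<open>v'\<close> is bounded above near \<open>0\<close>, and \<open>(s / r)\<^bsup>d - 1\<^esup> \<le> s / r\<close> as \<open>d \<ge> 2\<close>.
\<close>

lemma gibbs_le_near_0:
  obtains \<delta> E where "0 < \<delta>" "\<delta> \<le> 1" "E \<ge> 1"
    "\<And>s r. 0 < s \<Longrightarrow> s \<le> r \<Longrightarrow> r < \<delta> \<Longrightarrow> gibbs s \<le> s / r * E * gibbs r"
proof -
  obtain b M where b: "b > 0" "M \<ge> 0" "\<And>y. 0 < y \<Longrightarrow> y < b \<Longrightarrow> v' y \<le> M"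
    using v'_bounded_above_near_0 by blast
  define \<delta> where "\<delta> = min b 1"
  define E where "E = exp (\<beta> * M)"
  have "gibbs s \<le> s / r * E * gibbs r" if s: "0 < s" "s \<le> r" "r < \<delta>" for s r
  proof -
    have "v r - v s \<le> M * (r - s)"
    proof (cases "s = r")
      case False
      then obtain z where z: "s < z" "z < r" "v r - v s = (r - s) * v' z"
        using MVT2[of s r v v'] has_derivative_v s by force
      then show ?thesis
        using b(3)[of z] s mult_left_mono[of "v' z" M "r - s"] unfolding \<delta>_def by (simp add: mult.commute)
    qed simp
    also have "\<dots> \<le> M" using b(2) s unfolding \<delta>_def by (intro mult_left_le) auto
    finally have "\<beta> * (v r - v s) \<le> \<beta> * M" using beta_pos by simp
    moreover have "(real d - 1) * (ln s - ln r) \<le> ln s - ln r"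
      using s d_ge_2 mult_right_mono_neg[of 1 "real d - 1" "ln s - ln r"] by simp
    ultimately have "\<beta> * (v r - v s) + (real d - 1) * (ln s - ln r) \<le> \<beta> * M + (ln s - ln r)"
      by linarith
    then have "exp (\<beta> * (v r - v s) + (real d - 1) * (ln s - ln r)) \<le> exp (\<beta> * M + (ln s - ln r))"
      by simp
    also have "\<dots> = E * (s / r)" using s by (simp add: E_def exp_add exp_diff)
    finally have ratio: "exp (\<beta> * (v r - v s) + (real d - 1) * (ln s - ln r)) \<le> E * (s / r)" .
    have "gibbs s = gibbs r * exp (\<beta> * (v r - v s) + (real d - 1) * (ln s - ln r))"
      using beta_pos unfolding gibbs_def vstar_def by (simp add: exp_add[symmetric] field_simps)
    also have "\<dots> \<le> gibbs r * (E * (s / r))"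
      using ratio gibbs_pos[of r] by (intro mult_left_mono) auto
    finally show ?thesis by (simp add: mult_ac)
  qed
  moreover have "E \<ge> 1" unfolding E_def using beta_pos b(2) by simp
  ultimately show ?thesis using that[of \<delta> E] b(1) unfolding \<delta>_def by simp
qed

lemma dvstar_superlinear:
  assumes "K > 0" obtains R where "R \<ge> 1" "\<And>t. t \<ge> R \<Longrightarrow> dvstar t \<ge> K * t"
proof -
  define c where "c = (real d - 1) / \<beta>"
  have c: "c \<ge> 0" unfolding c_def using beta_pos d_ge_2 by simp
  obtain N where N: "\<And>x. x \<ge> N \<Longrightarrow> K + c \<le> v' x / x"
    using v'_superlinear unfolding filterlim_at_top eventually_at_top_linorder by blast
  have "dvstar t \<ge> K * t" if t: "t \<ge> max N 1" for t
  proof -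
    have "(K + c) * t \<le> v' t" using N[of t] t by (simp add: pos_le_divide_eq)
    moreover have "c / t \<le> c * t"
      using t c mult_left_mono[of 1 "t * t" c] mult_mono[of 1 t 1 t]
      by (simp add: pos_divide_le_eq mult_ac)
    moreover have "dvstar t = v' t - c / t" unfolding dvstar_def c_def using t by simp
    ultimately show ?thesis by (simp add: algebra_simps)
  qed
  then show ?thesis using that[of "max N 1"] by simp
qed

lemma gibbs_tail_le:
  assumes "K > 0"
  obtains R where "R \<ge> 1" "\<And>r s. R \<le> r \<Longrightarrow> r \<le> s \<Longrightarrow> gibbs s \<le> gibbs r * exp (- \<beta> * K * r * (s - r))"
proof -
  obtain R where R: "R \<ge> 1" "\<And>t. t \<ge> R \<Longrightarrow> dvstar t \<ge> K * t"
    using dvstar_superlinear[OF assms] by blast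
  have "gibbs s \<le> gibbs r * exp (- \<beta> * K * r * (s - r))" if rs: "R \<le> r" "r \<le> s" for r s
  proof -
    have "K * r * (s - r) \<le> vstar \<beta> d v s - vstar \<beta> d v r"
    proof (cases "r = s")
      case False
      then obtain z where z: "r < z" "z < s" "vstar \<beta> d v s - vstar \<beta> d v r = (s - r) * dvstar z"
        using MVT2[of r s "vstar \<beta> d v" dvstar] has_derivative_vstar rs R(1) by force
      have "K * r \<le> dvstar z"
        using R(2)[of z] z rs assms mult_left_mono[of r z K] by linarith
      then show ?thesis using z rs mult_left_mono[of "K * r" "dvstar z" "s - r"] by (simp add: mult_ac)
    qed simp
    then have "\<beta> * (K * r * (s - r)) \<le> \<beta> * (vstar \<beta> d v s - vstar \<beta> d v r)"
      using beta_pos by (intro mult_left_mono) auto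
    then have "- \<beta> * vstar \<beta> d v s \<le> - \<beta> * vstar \<beta> d v r + (- \<beta> * K * r * (s - r))"
      by (simp add: algebra_simps)
    then show ?thesis unfolding gibbs_def exp_add[symmetric] by simp
  qed
  then show ?thesis using that R(1) by blast
qed

lemma gibbs_bounded_on_Ioc:
  obtains B where "\<And>s. 0 < s \<Longrightarrow> s \<le> R \<Longrightarrow> gibbs s \<le> B"
proof -
  obtain \<delta> E where \<delta>E: "0 < \<delta>" "\<delta> \<le> 1" "E \<ge> 1"
    "\<And>s r. 0 < s \<Longrightarrow> s \<le> r \<Longrightarrow> r < \<delta> \<Longrightarrow> gibbs s \<le> s / r * E * gibbs r"
    by (metis gibbs_le_near_0)
  define r0 where "r0 = \<delta> / 2"
  have r0: "0 < r0" "r0 < \<delta>" using \<delta>E unfolding r0_def by auto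
  have "compact {r0..max r0 R}" "{r0..max r0 R} \<noteq> {}" "continuous_on {r0..max r0 R} gibbs"
    using r0 by (auto intro: continuous_on_gibbs)
  then obtain x0 where x0: "\<And>y. y \<in> {r0..max r0 R} \<Longrightarrow> gibbs y \<le> gibbs x0"
    using continuous_attains_sup by metis
  have "gibbs s \<le> max (E * gibbs r0) (gibbs x0)" if s: "0 < s" "s \<le> R" for s
  proof (cases "s \<le> r0")
    case True
    have "gibbs s \<le> s / r0 * E * gibbs r0" using \<delta>E(4)[OF s(1) True r0(2)] .
    also have "\<dots> \<le> 1 * E * gibbs r0"
      using True r0 \<delta>E(3) gibbs_pos[of r0] s by (intro mult_right_mono) auto
    finally show ?thesis by simp
  next
    case False
    then show ?thesis using x0[of s] s by simp
  qed
  then show ?thesis by (rule that)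
qed

lemma moment2_gibbs_le_exp:
  obtains R C where "R \<ge> 1" "\<And>s. s \<ge> R \<Longrightarrow> (1 + s\<^sup>2) * gibbs s \<le> C * exp (- s)"
proof -
  obtain R where R: "R \<ge> 1" "\<And>r s. R \<le> r \<Longrightarrow> r \<le> s \<Longrightarrow> gibbs s \<le> gibbs r * exp (- \<beta> * (2 / \<beta>) * r * (s - r))"
    using gibbs_tail_le[of "2 / \<beta>"] beta_pos by auto
  define C where "C = 4 * (1 + R\<^sup>2) * gibbs R * exp R"
  have "(1 + s\<^sup>2) * gibbs s \<le> C * exp (- s)" if sR: "s \<ge> R" for s
  proof -
    have "gibbs s \<le> gibbs R * exp (- 2 * R * (s - R))" using R(2)[of R s] sR beta_pos by simp
    also have "\<dots> \<le> gibbs R * exp (- (2 * (s - R)))"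
    proof -
      have "2 * (s - R) \<le> (2 * R) * (s - R)" using sR R(1) by (intro mult_right_mono) auto
      then show ?thesis using gibbs_pos[of R] by (intro mult_left_mono) auto
    qed
    finally have "gibbs s \<le> gibbs R * exp (- (2 * (s - R)))" .
    moreover have "1 + s\<^sup>2 \<le> 4 * (1 + R\<^sup>2) * exp (s - R)"
      using one_plus_square_le_exp[of R "s - R"] R sR by simp
    ultimately have "(1 + s\<^sup>2) * gibbs s \<le> (4 * (1 + R\<^sup>2) * exp (s - R)) * (gibbs R * exp (- (2 * (s - R))))"
      using gibbs_pos[of s] by (intro mult_mono) auto
    also have "\<dots> = 4 * (1 + R\<^sup>2) * gibbs R * (exp (s - R) * exp (- (2 * (s - R))))"
      by (simp add: mult_ac)
    also have "exp (s - R) * exp (- (2 * (s - R))) = exp R * exp (- s)"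
      by (simp add: exp_add[symmetric])
    finally show ?thesis unfolding C_def by (simp add: mult_ac)
  qed
  then show ?thesis using that R(1) by blast
qed

lemma moment2_gibbs_integrable: "(\<lambda>s. (1 + s\<^sup>2) * gibbs s) absolutely_integrable_on {0<..}"
proof -
  define f where "f s = (1 + s\<^sup>2) * gibbs s" for s
  have f_cont: "continuous_on S f" if "S \<subseteq> {0<..}" for S
    unfolding f_def[abs_def] by (intro continuous_intros continuous_on_gibbs that)
  obtain R C where RC: "R \<ge> 1" "\<And>s. s \<ge> R \<Longrightarrow> f s \<le> C * exp (- s)"
    using moment2_gibbs_le_exp unfolding f_def by blast
  obtain B where B: "\<And>s. 0 < s \<Longrightarrow> s \<le> R \<Longrightarrow> gibbs s \<le> B"
    using gibbs_bounded_on_Ioc by blast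
  have "f integrable_on {0<..R}"
  proof (rule continuous_bounded_by_integrable(1)[OF f_cont])
    show "(\<lambda>_. (1 + R\<^sup>2) * B) integrable_on {0<..R}"
      using has_integral_const_Ioc[of 0 R "(1 + R\<^sup>2) * B"] RC by (auto simp: integrable_on_def)
    fix x assume x: "x \<in> {0<..R}"
    then have "1 + x\<^sup>2 \<le> 1 + R\<^sup>2" by (auto intro!: power_mono)
    then show "\<bar>f x\<bar> \<le> (1 + R\<^sup>2) * B"
      unfolding f_def using B[of x] x gibbs_pos[of x] by (simp add: abs_mult mult_mono)
  qed auto
  moreover have "f integrable_on {R..}"
  proof (rule continuous_bounded_by_integrable(1)[OF f_cont])
    show "(\<lambda>x. C * exp (- 1 * x)) integrable_on {R..}"
      using integrable_on_cmult_left[OF integrable_on_exp_minus_to_infinity[of 1 R], of C] by simp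
    fix s assume "s \<in> {R..}"
    then show "\<bar>f s\<bar> \<le> C * exp (- 1 * s)"
      using RC(2)[of s] gibbs_pos[of s] unfolding f_def by simp
  qed (use RC in auto)
  ultimately have "(f has_integral (integral {0<..R} f + integral {R..} f)) ({0<..R} \<union> {R..})"
    by (intro has_integral_Un) (auto intro: negligible_subset[of "{R}"])
  moreover have "{0<..R} \<union> {R..} = {0<..}" using RC by auto
  ultimately have "f integrable_on {0<..}" by auto
  then show ?thesis unfolding f_def[symmetric]
    by (rule nonnegative_absolutely_integrable_1) (simp add: f_def gibbs_pos less_imp_le)
qed

lemma absolutely_integrable_if_le_moment2:
  assumes "continuous_on {0<..} f" "\<And>s. s > 0 \<Longrightarrow> \<bar>f s\<bar> \<le> C * ((1 + s\<^sup>2) * gibbs s)"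
  shows "f absolutely_integrable_on {0<..}"
proof (rule continuous_bounded_by_integrable(2)[OF assms(1)])
  show "(\<lambda>s. C * ((1 + s\<^sup>2) * gibbs s)) integrable_on {0<..}"
    using integrable_on_cmult_left[OF set_lebesgue_integral_eq_integral(1)[OF moment2_gibbs_integrable]]
    by simp
qed (use assms in auto)

lemma gibbs_integrable: "gibbs absolutely_integrable_on {0<..}"
  by (rule absolutely_integrable_if_le_moment2[of _ 1])
    (use continuous_on_gibbs gibbs_pos in \<open>auto simp: less_imp_le\<close>)

lemma mult_gibbs_integrable: "(\<lambda>s. s * gibbs s) absolutely_integrable_on {0<..}"
proof (rule absolutely_integrable_if_le_moment2[of _ 1])
  show "continuous_on {0<..} (\<lambda>s. s * gibbs s)" by (intro continuous_intros continuous_on_gibbs) auto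
  fix s :: real assume "s > 0"
  then show "\<bar>s * gibbs s\<bar> \<le> 1 * ((1 + s\<^sup>2) * gibbs s)"
    using le_one_plus_square[of s] gibbs_pos[of s] by (simp add: abs_mult mult_right_mono)
qed

lemma Zstar_eq: "Z = integral {0<..} gibbs"
proof -
  have "set_integrable lborel {0<..} gibbs"
    using set_integrable_lborel_iff_absolutely_integrable_on continuous_on_gibbs gibbs_integrable by simp
  then show ?thesis
    unfolding Zstar_def gibbs_def[symmetric] by (rule set_borel_integral_eq_integral(2))
qed

lemma Zstar_pos: "Z > 0"
proof -
  obtain x1 where x1: "\<And>y. y \<in> {1..2} \<Longrightarrow> gibbs x1 \<le> gibbs y"
    using continuous_attains_inf[of "{1..2::real}" gibbs] continuous_on_gibbs[of "{1..2}"] by force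
  have i12: "gibbs integrable_on {1..2}"
    by (rule integrable_continuous_interval) (rule continuous_on_gibbs, auto)
  have "gibbs x1 = integral {1..2::real} (\<lambda>_. gibbs x1)"
    using has_integral_const_real[of "gibbs x1" 1 2] by (simp add: integral_unique)
  also have "\<dots> \<le> integral {1..2} gibbs"
    by (rule integral_le) (use i12 x1 in auto)
  also have "\<dots> \<le> integral {0<..} gibbs"
    by (rule integral_subset_le)
      (use i12 set_lebesgue_integral_eq_integral(1)[OF gibbs_integrable] gibbs_pos in \<open>auto simp: less_imp_le\<close>)
  finally show ?thesis unfolding Zstar_eq using gibbs_pos[of x1] by simp
qed

definition pistar_density :: "real \<Rightarrow> real" where
  "pistar_density r = indicator {0<..} r * gibbs r / Z"

lemma pistar_eq: "pistar \<beta> d v = density lborel (\<lambda>r. ennreal (pistar_density r))"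
  unfolding pistar_def pistar_density_def gibbs_def ..

lemma pistar_density_eq: "pistar_density = (\<lambda>x. indicator {0<..} x *\<^sub>R (gibbs x / Z))"
  by (simp add: pistar_density_def fun_eq_iff)

lemma pistar_density_measurable: "pistar_density \<in> borel_measurable lborel"
  unfolding pistar_density_eq measurable_lborel2
  by (rule borel_measurable_continuous_on_indicator)
    (auto intro!: continuous_intros continuous_on_gibbs simp: less_imp_neq[OF Zstar_pos, symmetric])

lemma pistar_density_nonneg: "pistar_density x \<ge> 0"
  unfolding pistar_density_def using Zstar_pos gibbs_pos[of x] by (auto simp: indicator_def)

lemma rstar_eq: "rs = integral {0<..} (\<lambda>s. s * gibbs s) / Z"
proof -
  have c: "continuous_on {0<..} (\<lambda>x. x * gibbs x / Z)"
    by (intro continuous_intros continuous_on_gibbs) (use Zstar_pos in auto)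
  have "rs = integral\<^sup>L lborel (\<lambda>x. pistar_density x *\<^sub>R x)"
    unfolding rstar_def pistar_eq
    by (rule integral_density) (use pistar_density_measurable pistar_density_nonneg in auto)
  also have "(\<lambda>x. pistar_density x *\<^sub>R x) = (\<lambda>x. indicator {0<..} x *\<^sub>R (x * gibbs x / Z))"
    unfolding pistar_density_eq by (simp add: fun_eq_iff)
  also have "integral\<^sup>L lborel \<dots> = integral {0<..} (\<lambda>x. x * gibbs x / Z)"
    unfolding set_lebesgue_integral_def[symmetric]
    using set_integrable_lborel_iff_absolutely_integrable_on[OF _ c]
      set_integrable_divide[OF mult_gibbs_integrable, of Z]
    by (intro set_borel_integral_eq_integral(2)) auto
  finally show ?thesis by simp
qed

lemma L2pistar_iff:
  assumes "continuous_on {0<..} f"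
  shows "L2pistar \<beta> d v f \<longleftrightarrow> (\<lambda>s. gibbs s * (f s)\<^sup>2) absolutely_integrable_on {0<..}"
proof -
  have m: "(\<lambda>x. indicator {0<..} x *\<^sub>R (f x)\<^sup>2) \<in> borel_measurable lborel"
    unfolding measurable_lborel2
    by (rule borel_measurable_continuous_on_indicator) (auto intro!: continuous_intros assms)
  have c: "continuous_on {0<..} (\<lambda>x. gibbs x * (f x)\<^sup>2 / Z)"
    by (intro continuous_intros continuous_on_gibbs assms) (use Zstar_pos in auto)
  have "L2pistar \<beta> d v f \<longleftrightarrow>
      integrable lborel (\<lambda>x. pistar_density x *\<^sub>R (indicator {0<..} x *\<^sub>R (f x)\<^sup>2))"
    unfolding L2pistar_def set_integrable_def pistar_eq
    by (rule integrable_density) (use m pistar_density_measurable pistar_density_nonneg in auto)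
  also have "(\<lambda>x. pistar_density x *\<^sub>R (indicator {0<..} x *\<^sub>R (f x)\<^sup>2)) =
      (\<lambda>x. indicator {0<..} x *\<^sub>R (gibbs x * (f x)\<^sup>2 / Z))"
    unfolding pistar_density_eq by (simp add: fun_eq_iff indicator_def)
  also have "integrable lborel \<dots> \<longleftrightarrow> (\<lambda>x. gibbs x * (f x)\<^sup>2 / Z) absolutely_integrable_on {0<..}"
    using set_integrable_lborel_iff_absolutely_integrable_on[OF _ c] by (simp add: set_integrable_def)
  also have "\<dots> \<longleftrightarrow> (\<lambda>s. gibbs s * (f s)\<^sup>2) absolutely_integrable_on {0<..}"
  proof
    assume "(\<lambda>x. gibbs x * (f x)\<^sup>2 / Z) absolutely_integrable_on {0<..}"
    from set_integrable_mult_left[OF this, of Z]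
    show "(\<lambda>s. gibbs s * (f s)\<^sup>2) absolutely_integrable_on {0<..}" using Zstar_pos by simp
  qed (rule set_integrable_divide)
  finally show ?thesis .
qed

lemma L2pistar_if_sq_le:
  assumes "continuous_on {0<..} f" "\<And>s. s > 0 \<Longrightarrow> (f s)\<^sup>2 \<le> C * (1 + s\<^sup>2)"
  shows "L2pistar \<beta> d v f"
  unfolding L2pistar_iff[OF assms(1)]
proof (rule absolutely_integrable_if_le_moment2[of _ C])
  show "continuous_on {0<..} (\<lambda>s. gibbs s * (f s)\<^sup>2)"
    by (intro continuous_intros continuous_on_gibbs assms(1)) auto
  fix s :: real assume "s > 0"
  then show "\<bar>gibbs s * (f s)\<^sup>2\<bar> \<le> C * ((1 + s\<^sup>2) * gibbs s)"
    using assms(2)[of s] gibbs_pos[of s] mult_left_mono[of "(f s)\<^sup>2" _ "gibbs s"] by (simp add: mult_ac)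
qed

definition centred_gibbs :: "real \<Rightarrow> real" where
  "centred_gibbs s = (rs - s) * gibbs s"

definition centred_gibbs_integral :: "real \<Rightarrow> real" where
  "centred_gibbs_integral r = integral {0<..r} centred_gibbs"

definition phi :: "real \<Rightarrow> real" where
  "phi r = \<beta> * centred_gibbs_integral r / gibbs r"

lemma continuous_on_centred_gibbs: "S \<subseteq> {0<..} \<Longrightarrow> continuous_on S centred_gibbs"
  unfolding centred_gibbs_def[abs_def] by (intro continuous_intros continuous_on_gibbs)

lemma centred_gibbs_integrable: "centred_gibbs absolutely_integrable_on {0<..}"
proof (rule absolutely_integrable_if_le_moment2[of _ "\<bar>rs\<bar> + 1"])
  show "continuous_on {0<..} centred_gibbs" by (rule continuous_on_centred_gibbs) auto
  fix s :: real assume s: "s > 0"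
  have "\<bar>rs - s\<bar> \<le> \<bar>rs\<bar> * 1 + 1 * s" using abs_triangle_ineq4[of rs s] s by simp
  also have "\<dots> \<le> \<bar>rs\<bar> * (1 + s\<^sup>2) + 1 * (1 + s\<^sup>2)"
    using le_one_plus_square[of s] by (intro add_mono mult_left_mono) auto
  finally have "\<bar>rs - s\<bar> * gibbs s \<le> ((\<bar>rs\<bar> + 1) * (1 + s\<^sup>2)) * gibbs s"
    using gibbs_pos[of s] by (intro mult_right_mono) (auto simp: algebra_simps)
  then show "\<bar>centred_gibbs s\<bar> \<le> (\<bar>rs\<bar> + 1) * ((1 + s\<^sup>2) * gibbs s)"
    unfolding centred_gibbs_def using gibbs_pos[of s] by (simp add: abs_mult mult.assoc)
qed

lemma centred_gibbs_integrable_on: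
  "S \<in> sets lebesgue \<Longrightarrow> S \<subseteq> {0<..} \<Longrightarrow> centred_gibbs integrable_on S"
  using set_lebesgue_integral_eq_integral(1)[OF set_integrable_subset[OF centred_gibbs_integrable]]
  by blast

lemma integral_centred_gibbs: "integral {0<..} centred_gibbs = 0"
proof -
  have "gibbs integrable_on {0<..}" "(\<lambda>s. s * gibbs s) integrable_on {0<..}"
    using set_lebesgue_integral_eq_integral(1) gibbs_integrable mult_gibbs_integrable by blast+
  then have "integral {0<..} centred_gibbs = rs * integral {0<..} gibbs - integral {0<..} (\<lambda>s. s * gibbs s)"
    unfolding centred_gibbs_def left_diff_distrib
    by (subst integral_diff) (auto intro: integrable_on_mult_right)
  also have "\<dots> = 0"
    using rstar_eq Zstar_eq Zstar_pos by (simp add: field_simps)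
  finally show ?thesis .
qed

lemma centred_gibbs_integral_split:
  assumes "0 < a" "a \<le> x"
  shows "centred_gibbs_integral x = centred_gibbs_integral a + integral {a..x} centred_gibbs"
proof -
  have "centred_gibbs integrable_on {0<..a}" "centred_gibbs integrable_on {a..x}"
    using assms by (auto intro: centred_gibbs_integrable_on)
  then have "(centred_gibbs has_integral (centred_gibbs_integral a + integral {a..x} centred_gibbs))
      ({0<..a} \<union> {a..x})"
    unfolding centred_gibbs_integral_def
    by (intro has_integral_Un integrable_integral) (auto intro: negligible_subset[of "{a}"])
  moreover have "{0<..a} \<union> {a..x} = {0<..x}" using assms by auto
  ultimately show ?thesis unfolding centred_gibbs_integral_def[of x] by (simp add: integral_unique)
qed

lemma centred_gibbs_integral_eq_tail:
  assumes "r > 0"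
  shows "centred_gibbs_integral r = - integral {r..} centred_gibbs"
proof -
  have "centred_gibbs integrable_on {0<..r}" "centred_gibbs integrable_on {r..}"
    using assms by (auto intro: centred_gibbs_integrable_on)
  then have "(centred_gibbs has_integral (centred_gibbs_integral r + integral {r..} centred_gibbs))
      ({0<..r} \<union> {r..})"
    unfolding centred_gibbs_integral_def
    by (intro has_integral_Un integrable_integral) (auto intro: negligible_subset[of "{r}"])
  moreover have "{0<..r} \<union> {r..} = {0<..}" using assms by auto
  ultimately show ?thesis using integral_centred_gibbs by (simp add: integral_unique)
qed

lemma has_derivative_centred_gibbs_integral:
  assumes "r > 0"
  shows "(centred_gibbs_integral has_real_derivative centred_gibbs r) (at r)"
proof -
  have ab: "0 < r / 2" "r / 2 < r" "r < r + 1" using assms by auto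
  have "((\<lambda>x. integral {r / 2..x} centred_gibbs) has_real_derivative centred_gibbs r)
      (at r within {r / 2..r + 1})"
    by (rule integral_has_real_derivative) (use ab in \<open>auto intro!: continuous_on_centred_gibbs\<close>)
  then have "((\<lambda>x. centred_gibbs_integral (r / 2) + integral {r / 2..x} centred_gibbs)
      has_real_derivative centred_gibbs r) (at r within {r / 2..r + 1})"
    using DERIV_add[OF DERIV_const] by fastforce
  then have "(centred_gibbs_integral has_real_derivative centred_gibbs r) (at r within {r / 2..r + 1})"
  proof (rule has_field_derivative_transform_within[where d=1])
    fix x assume "x \<in> {r / 2..r + 1}"
    then show "centred_gibbs_integral (r / 2) + integral {r / 2..x} centred_gibbs
        = centred_gibbs_integral x"
      using centred_gibbs_integral_split[of "r / 2" x] ab by simp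
  qed (use ab in auto)
  moreover have "at r within {r / 2..r + 1} = at r" by (rule at_within_interior) (use ab in simp)
  ultimately show ?thesis by simp
qed

lemma has_derivative_phi:
  assumes "r > 0"
  shows "(phi has_real_derivative \<beta> * (rs - r + dvstar r * phi r)) (at r)"
proof -
  have "((\<lambda>r. \<beta> * centred_gibbs_integral r / gibbs r) has_real_derivative
      (\<beta> * centred_gibbs r * gibbs r - \<beta> * centred_gibbs_integral r * (- \<beta> * dvstar r * gibbs r))
        / (gibbs r * gibbs r)) (at r)"
    using gibbs_pos[of r]
    by (intro DERIV_divide DERIV_cmult has_derivative_centred_gibbs_integral has_derivative_gibbs assms) simp
  moreover have "(\<beta> * centred_gibbs r * gibbs r - \<beta> * centred_gibbs_integral r * (- \<beta> * dvstar r * gibbs r))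
        / (gibbs r * gibbs r) = \<beta> * (rs - r + dvstar r * phi r)"
    using gibbs_pos[of r] unfolding centred_gibbs_def phi_def by (simp add: field_simps)
  ultimately show ?thesis unfolding phi_def[abs_def] by simp
qed

lemma continuous_on_phi: "continuous_on {0<..} phi"
  by (intro continuous_at_imp_continuous_on ballI DERIV_isCont[OF has_derivative_phi]) auto

lemma is_solution_iff_has_derivative:
  "is_solution \<beta> d v v' \<psi> \<longleftrightarrow>
    (\<forall>r>0. (\<psi> has_real_derivative \<beta> * (rs - r + dvstar r * \<psi> r)) (at r))"
proof -
  have "deriv \<psi> r / \<beta> = rs - r + dvstar r * \<psi> r \<longleftrightarrow> deriv \<psi> r = \<beta> * (rs - r + dvstar r * \<psi> r)" for r
    using beta_pos by (auto simp: field_simps)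
  then show ?thesis
    unfolding is_solution_def dvstar_def[symmetric]
    by (metis DERIV_deriv_iff_real_differentiable DERIV_imp_deriv real_differentiable_def)
qed

lemma is_solution_phi: "is_solution \<beta> d v v' phi"
  using has_derivative_phi is_solution_iff_has_derivative by blast

lemma abs_phi_eq: "\<bar>phi r\<bar> = \<beta> * \<bar>centred_gibbs_integral r\<bar> / gibbs r"
  unfolding phi_def using beta_pos gibbs_pos[of r] by (simp add: abs_mult)

lemma abs_centred_gibbs_integral_le_near_0:
  obtains \<delta> C where "\<delta> > 0" "\<And>r. 0 < r \<Longrightarrow> r < \<delta> \<Longrightarrow> \<bar>centred_gibbs_integral r\<bar> \<le> C * r * gibbs r"
proof -
  obtain \<delta> E where \<delta>E: "0 < \<delta>" "\<delta> \<le> 1" "E \<ge> 1"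
    "\<And>s r. 0 < s \<Longrightarrow> s \<le> r \<Longrightarrow> r < \<delta> \<Longrightarrow> gibbs s \<le> s / r * E * gibbs r"
    by (metis gibbs_le_near_0)
  have "\<bar>centred_gibbs_integral r\<bar> \<le> (\<bar>rs\<bar> + 1) * E * r * gibbs r" if r: "0 < r" "r < \<delta>" for r
  proof -
    have bound: "norm (centred_gibbs s) \<le> (\<bar>rs\<bar> + 1) * E * gibbs r" if s: "s \<in> {0<..r}" for s
    proof -
      have "\<bar>rs - s\<bar> \<le> \<bar>rs\<bar> + 1" using abs_triangle_ineq4[of rs s] s r \<delta>E(2) by auto
      moreover have "gibbs s \<le> s / r * E * gibbs r" using \<delta>E(4)[of s r] s r by auto
      then have "gibbs s \<le> E * gibbs r"
        using s r \<delta>E(3) gibbs_pos[of r] mult_right_mono[of "s / r" 1 "E * gibbs r"] by auto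
      ultimately have "\<bar>rs - s\<bar> * gibbs s \<le> (\<bar>rs\<bar> + 1) * (E * gibbs r)"
        using gibbs_pos[of s] by (intro mult_mono) auto
      then show ?thesis
        unfolding centred_gibbs_def using gibbs_pos[of s] by (simp add: abs_mult mult.assoc)
    qed
    have "centred_gibbs integrable_on {0<..r}" using r by (intro centred_gibbs_integrable_on) auto
    then have "norm (centred_gibbs_integral r) \<le> integral {0<..r} (\<lambda>_. (\<bar>rs\<bar> + 1) * E * gibbs r)"
      unfolding centred_gibbs_integral_def
      using has_integral_const_Ioc[of 0 r] r bound
      by (intro integral_norm_bound_integral) (auto simp: integrable_on_def)
    also have "\<dots> = (\<bar>rs\<bar> + 1) * E * r * gibbs r"
      using integral_unique[OF has_integral_const_Ioc[of 0 r "(\<bar>rs\<bar> + 1) * E * gibbs r"]] r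
      by (simp add: mult_ac)
    finally show ?thesis by simp
  qed
  then show ?thesis using that[of \<delta>] \<delta>E(1) by blast
qed

lemma phi_tendsto_0_at_right: "(phi \<longlongrightarrow> 0) (at_right 0)"
proof -
  obtain \<delta> C where \<delta>C: "\<delta> > 0"
    "\<And>r. 0 < r \<Longrightarrow> r < \<delta> \<Longrightarrow> \<bar>centred_gibbs_integral r\<bar> \<le> C * r * gibbs r"
    by (metis abs_centred_gibbs_integral_le_near_0)
  have phi_le: "\<bar>phi r\<bar> \<le> \<beta> * C * r" if "0 < r" "r < \<delta>" for r
  proof -
    have "\<beta> * \<bar>centred_gibbs_integral r\<bar> / gibbs r \<le> \<beta> * (C * r * gibbs r) / gibbs r"
      using \<delta>C(2)[OF that] beta_pos gibbs_pos[of r] by (intro divide_right_mono mult_left_mono) auto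
    then show ?thesis unfolding abs_phi_eq using gibbs_pos[of r] by simp
  qed
  show ?thesis
  proof (rule Lim_null_comparison)
    show "eventually (\<lambda>r. norm (phi r) \<le> \<beta> * C * r) (at_right 0)"
      using eventually_at_right_real[OF \<delta>C(1)] by eventually_elim (use phi_le in auto)
    show "((\<lambda>r. \<beta> * C * r) \<longlongrightarrow> 0) (at_right 0)"
      by (rule tendsto_eq_intros) (auto intro: tendsto_ident_at)
  qed
qed

lemma abs_centred_gibbs_integral_le_at_top:
  assumes "K > 0"
  obtains R where "R \<ge> 1"
    "\<And>r. r \<ge> R \<Longrightarrow> \<bar>centred_gibbs_integral r\<bar> \<le> gibbs r * ((r + \<bar>rs\<bar>) / (\<beta> * K * r) + 4 / (\<beta> * K * r)\<^sup>2)"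
proof -
  obtain R where R: "R \<ge> 1" "\<And>r s. R \<le> r \<Longrightarrow> r \<le> s \<Longrightarrow> gibbs s \<le> gibbs r * exp (- \<beta> * K * r * (s - r))"
    using gibbs_tail_le[OF assms] by metis
  have "\<bar>centred_gibbs_integral r\<bar> \<le> gibbs r * ((r + \<bar>rs\<bar>) / (\<beta> * K * r) + 4 / (\<beta> * K * r)\<^sup>2)"
    if r: "r \<ge> R" for r
  proof -
    define a where "a = \<beta> * K * r"
    have a: "a > 0" unfolding a_def using beta_pos assms r R(1) by simp
    define G where
      "G s = gibbs r * ((r + \<bar>rs\<bar>) * exp (- a * (s - r)) + 2 / a * exp (- (a / 2) * (s - r)))" for s
    have G: "(G has_integral gibbs r * ((r + \<bar>rs\<bar>) * (1 / a) + 2 / a * (1 / (a / 2)))) {r..}"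
      unfolding G_def using a by (intro has_integral_mult_right has_integral_add has_integral_exp_decay) auto
    have bound: "norm (centred_gibbs s) \<le> G s" if s: "s \<in> {r..}" for s
    proof -
      have "\<bar>rs - s\<bar> \<le> (r + \<bar>rs\<bar>) + (s - r)" using s r R(1) by (auto simp: abs_if)
      then have "\<bar>centred_gibbs s\<bar> \<le> ((r + \<bar>rs\<bar>) + (s - r)) * gibbs s"
        unfolding centred_gibbs_def using gibbs_pos[of s] by (simp add: abs_mult mult_right_mono)
      also have "\<dots> \<le> ((r + \<bar>rs\<bar>) + (s - r)) * (gibbs r * exp (- a * (s - r)))"
        using R(2)[OF r, of s] s r R(1) unfolding a_def by (intro mult_left_mono) auto
      also have "\<dots> = gibbs r * ((r + \<bar>rs\<bar>) * exp (- a * (s - r)) + (s - r) * exp (- a * (s - r)))"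
        by (simp add: algebra_simps)
      also have "\<dots> \<le> G s"
        unfolding G_def using mult_exp_neg_le[OF a, of "s - r"] gibbs_pos[of r] by (simp add: mult_left_mono)
      finally show ?thesis by simp
    qed
    have "centred_gibbs integrable_on {r..}" using r R(1) by (intro centred_gibbs_integrable_on) auto
    then have "norm (integral {r..} centred_gibbs) \<le> integral {r..} G"
      using G bound by (intro integral_norm_bound_integral) (auto simp: integrable_on_def)
    moreover have "centred_gibbs_integral r = - integral {r..} centred_gibbs"
      using r R(1) by (intro centred_gibbs_integral_eq_tail) auto
    ultimately have "\<bar>centred_gibbs_integral r\<bar> \<le> integral {r..} G" by simp
    also have "\<dots> = gibbs r * ((r + \<bar>rs\<bar>) / a + 4 / a\<^sup>2)"
      using integral_unique[OF G] by (simp add: power2_eq_square)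
    finally show ?thesis unfolding a_def .
  qed
  then show ?thesis using that R(1) by blast
qed

lemma abs_phi_le_at_top:
  assumes K: "K \<ge> 1"
  obtains R where "\<And>r. r \<ge> R \<Longrightarrow> \<bar>phi r\<bar> \<le> (1 + \<bar>rs\<bar> + 4 / \<beta>) / K"
proof -
  obtain R where R: "R \<ge> 1"
    "\<And>r. r \<ge> R \<Longrightarrow> \<bar>centred_gibbs_integral r\<bar> \<le> gibbs r * ((r + \<bar>rs\<bar>) / (\<beta> * K * r) + 4 / (\<beta> * K * r)\<^sup>2)"
    using abs_centred_gibbs_integral_le_at_top[of K] K by auto
  have "\<bar>phi r\<bar> \<le> (1 + \<bar>rs\<bar> + 4 / \<beta>) / K" if r: "r \<ge> R" for r
  proof -
    have r1: "r \<ge> 1" using r R(1) by simp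
    have "\<bar>phi r\<bar> \<le> \<beta> * (gibbs r * ((r + \<bar>rs\<bar>) / (\<beta> * K * r) + 4 / (\<beta> * K * r)\<^sup>2)) / gibbs r"
      unfolding abs_phi_eq using R(2)[OF r] beta_pos gibbs_pos[of r]
      by (intro divide_right_mono mult_left_mono) auto
    also have "\<dots> = (1 + \<bar>rs\<bar> / r) / K + 4 / (\<beta> * K * (K * r\<^sup>2))"
      using beta_pos K r1 gibbs_pos[of r] by (simp add: field_simps power2_eq_square)
    also have "\<dots> \<le> (1 + \<bar>rs\<bar>) / K + 4 / (\<beta> * K)"
    proof (intro add_mono divide_right_mono divide_left_mono)
      show "\<bar>rs\<bar> / r \<le> \<bar>rs\<bar>" using r1 by (simp add: divide_le_eq mult_le_cancel_left1)
      have "1 \<le> K * r\<^sup>2" using K r1 one_le_power[of r 2] mult_mono[of 1 K 1 "r\<^sup>2"] by simp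
      then show "\<beta> * K \<le> \<beta> * K * (K * r\<^sup>2)" using beta_pos K by simp
    qed (use beta_pos K r1 in auto)
    also have "\<dots> = (1 + \<bar>rs\<bar> + 4 / \<beta>) / K"
      by (simp add: add_divide_distrib)
    finally show ?thesis .
  qed
  then show ?thesis by (rule that)
qed

lemma phi_tendsto_0_at_top: "(phi \<longlongrightarrow> 0) at_top"
proof (rule tendstoI)
  fix e :: real assume e: "e > 0"
  define C where "C = 1 + \<bar>rs\<bar> + 4 / \<beta>"
  have C: "C > 0" unfolding C_def using beta_pos by (simp add: add_pos_nonneg)
  obtain R where R: "\<And>r. r \<ge> R \<Longrightarrow> \<bar>phi r\<bar> \<le> C / max 1 (2 * C / e)"
    using abs_phi_le_at_top[of "max 1 (2 * C / e)"] unfolding C_def by auto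
  have "C / max 1 (2 * C / e) \<le> C / (2 * C / e)"
    using C e by (intro divide_left_mono) auto
  also have "\<dots> < e" using C e by simp
  finally show "eventually (\<lambda>r. dist (phi r) 0 < e) at_top"
    unfolding eventually_at_top_linorder using R by (intro exI[of _ R]) force
qed

lemma phi_bounded: "\<exists>B. \<forall>r>0. \<bar>phi r\<bar> \<le> B"
  using bounded_if_tendsto_at_right_0_and_at_top[OF continuous_on_phi phi_tendsto_0_at_right
      phi_tendsto_0_at_top] .

lemma L2pistar_phi: "L2pistar \<beta> d v phi"
proof -
  obtain B where B: "\<And>r. r > 0 \<Longrightarrow> \<bar>phi r\<bar> \<le> B" using phi_bounded by blast
  show ?thesis
  proof (rule L2pistar_if_sq_le[OF continuous_on_phi, of "B\<^sup>2"])
    fix s :: real assume "s > 0"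
    then have "(phi s)\<^sup>2 \<le> B\<^sup>2 * 1" using B[of s] abs_le_square_iff by fastforce
    also have "\<dots> \<le> B\<^sup>2 * (1 + s\<^sup>2)" by (intro mult_left_mono) auto
    finally show "(phi s)\<^sup>2 \<le> B\<^sup>2 * (1 + s\<^sup>2)" .
  qed
qed

lemma L2pistar_primitive_phi:
  assumes "\<And>r. r > 0 \<Longrightarrow> (\<Phi> has_real_derivative phi r) (at r)"
  shows "L2pistar \<beta> d v \<Phi>"
proof -
  obtain B where "\<And>r. r > 0 \<Longrightarrow> \<bar>phi r\<bar> \<le> B" using phi_bounded by blast
  then obtain C where "\<And>s. s > 0 \<Longrightarrow> (\<Phi> s)\<^sup>2 \<le> C * (1 + s\<^sup>2)"
    using sq_le_if_bounded_derivative[OF assms] by blast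
  moreover have "continuous_on {0<..} \<Phi>"
    by (intro continuous_at_imp_continuous_on ballI DERIV_isCont) (use assms in auto)
  ultimately show ?thesis by (intro L2pistar_if_sq_le)
qed

lemma L2pistar_diff:
  assumes "continuous_on {0<..} f" "continuous_on {0<..} g" "L2pistar \<beta> d v f" "L2pistar \<beta> d v g"
  shows "L2pistar \<beta> d v (\<lambda>s. f s - g s)"
proof -
  have "(\<lambda>s. gibbs s * (f s)\<^sup>2) integrable_on {0<..}" "(\<lambda>s. gibbs s * (g s)\<^sup>2) integrable_on {0<..}"
    using assms L2pistar_iff set_lebesgue_integral_eq_integral(1) by blast+
  then have "(\<lambda>s. 2 * (gibbs s * (f s)\<^sup>2) + 2 * (gibbs s * (g s)\<^sup>2)) integrable_on {0<..}"
    by (intro integrable_add integrable_on_mult_right)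
  moreover have "\<bar>gibbs s * (f s - g s)\<^sup>2\<bar> \<le> 2 * (gibbs s * (f s)\<^sup>2) + 2 * (gibbs s * (g s)\<^sup>2)" for s
  proof -
    have "(f s - g s)\<^sup>2 \<le> 2 * (f s)\<^sup>2 + 2 * (g s)\<^sup>2"
      using zero_le_power2[of "f s + g s"] by (simp add: power2_eq_square algebra_simps)
    then have "gibbs s * (f s - g s)\<^sup>2 \<le> gibbs s * (2 * (f s)\<^sup>2 + 2 * (g s)\<^sup>2)"
      using gibbs_pos[of s] by (intro mult_left_mono) auto
    then show ?thesis using gibbs_pos[of s] by (simp add: algebra_simps)
  qed
  moreover have "continuous_on {0<..} (\<lambda>s. f s - g s)" using assms by (intro continuous_intros)
  ultimately show ?thesis
    unfolding L2pistar_iff[OF \<open>continuous_on {0<..} (\<lambda>s. f s - g s)\<close>]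
    using gibbs_pos by (intro continuous_bounded_by_integrable(2))
      (auto intro!: continuous_intros continuous_on_gibbs assms(1,2))
qed

lemma not_L2pistar_inverse_gibbs:
  assumes "c \<noteq> 0"
  shows "\<not> L2pistar \<beta> d v (\<lambda>s. c / gibbs s)"
proof
  assume "L2pistar \<beta> d v (\<lambda>s. c / gibbs s)"
  moreover have "continuous_on {0<..} (\<lambda>s. c / gibbs s)"
    using gibbs_pos by (intro continuous_intros continuous_on_gibbs) (auto simp: less_imp_neq[symmetric])
  moreover have "gibbs s * (c / gibbs s)\<^sup>2 = c\<^sup>2 / gibbs s" for s
    using gibbs_pos[of s] by (simp add: power2_eq_square)
  ultimately have integrable: "(\<lambda>s. c\<^sup>2 / gibbs s) absolutely_integrable_on {0<..}"
    using L2pistar_iff by simp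
  obtain \<delta> E where \<delta>E: "0 < \<delta>" "\<delta> \<le> 1" "E \<ge> 1"
    "\<And>s r. 0 < s \<Longrightarrow> s \<le> r \<Longrightarrow> r < \<delta> \<Longrightarrow> gibbs s \<le> s / r * E * gibbs r"
    by (metis gibbs_le_near_0)
  define r0 where "r0 = \<delta> / 2"
  have r0: "0 < r0" "r0 < \<delta>" using \<delta>E unfolding r0_def by auto
  define k where "k = E * gibbs r0 / (r0 * c\<^sup>2)"
  have "(\<lambda>s. 1 / s) integrable_on {0<..r0}"
  proof (rule continuous_bounded_by_integrable(1))
    have "(\<lambda>s. c\<^sup>2 / gibbs s) absolutely_integrable_on {0<..r0}"
      by (rule set_integrable_subset[OF integrable]) auto
    then show "(\<lambda>s. k * (c\<^sup>2 / gibbs s)) integrable_on {0<..r0}"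
      using set_lebesgue_integral_eq_integral(1) integrable_on_mult_right by blast
    fix s assume "s \<in> {0<..r0}"
    then have s: "0 < s" "s \<le> r0" by auto
    have "r0 * gibbs s \<le> s * (E * gibbs r0)"
      using \<delta>E(4)[OF s r0(2)] r0 by (simp add: field_simps)
    then have "1 / s \<le> E * gibbs r0 / (r0 * gibbs s)"
      using s r0 gibbs_pos[of s] by (simp add: field_simps)
    also have "\<dots> = k * (c\<^sup>2 / gibbs s)"
      unfolding k_def using assms gibbs_pos[of s] r0 by (simp add: field_simps)
    finally show "\<bar>1 / s\<bar> \<le> k * (c\<^sup>2 / gibbs s)" using s by simp
  qed (auto intro!: continuous_intros)
  then show False using inverse_not_integrable_at_0[OF r0(1)] by simp
qed

lemma solution_eq_phi_plus_inverse_gibbs: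
  assumes "is_solution \<beta> d v v' \<psi>"
  obtains c where "\<And>r. r > 0 \<Longrightarrow> \<psi> r = phi r + c / gibbs r"
proof -
  have \<psi>': "(\<psi> has_real_derivative \<beta> * (rs - r + dvstar r * \<psi> r)) (at r)" if "r > 0" for r
    using assms that is_solution_iff_has_derivative by blast
  define u where "u r = \<psi> r * gibbs r - \<beta> * centred_gibbs_integral r" for r
  have "(u has_real_derivative 0) (at r within {0<..})" if r: "r \<in> {0<..}" for r
  proof -
    have "(u has_real_derivative \<beta> * (rs - r + dvstar r * \<psi> r) * gibbs r
        + (- \<beta> * dvstar r * gibbs r) * \<psi> r - \<beta> * centred_gibbs r) (at r)"
      unfolding u_def[abs_def] using r
      by (intro DERIV_diff DERIV_mult DERIV_cmult \<psi>' has_derivative_gibbs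
          has_derivative_centred_gibbs_integral) auto
    moreover have "\<beta> * (rs - r + dvstar r * \<psi> r) * gibbs r
        + (- \<beta> * dvstar r * gibbs r) * \<psi> r - \<beta> * centred_gibbs r = 0"
      unfolding centred_gibbs_def by (simp add: algebra_simps)
    ultimately show ?thesis by (simp add: has_field_derivative_at_within)
  qed
  then obtain c where c: "\<And>r. r \<in> {0<..} \<Longrightarrow> u r = c"
    using has_field_derivative_zero_constant[of "{0<..} :: real set" u] by auto
  have "\<psi> r = phi r + c / gibbs r" if "r > 0" for r
    using c[of r] that gibbs_pos[of r] unfolding u_def phi_def by (simp add: field_simps)
  then show ?thesis by (rule that)
qed

lemma solution_unique:
  assumes "is_solution \<beta> d v v' \<psi>" "L2pistar \<beta> d v \<psi>" "r > 0"
  shows "\<psi> r = phi r"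
proof -
  obtain c where c: "\<And>r. r > 0 \<Longrightarrow> \<psi> r = phi r + c / gibbs r"
    using solution_eq_phi_plus_inverse_gibbs[OF assms(1)] by blast
  have "continuous_on {0<..} \<psi>"
    using assms(1) is_solution_iff_has_derivative
    by (intro continuous_at_imp_continuous_on ballI DERIV_isCont) auto
  then have "L2pistar \<beta> d v (\<lambda>s. \<psi> s - phi s)"
    using L2pistar_diff continuous_on_phi assms(2) L2pistar_phi by blast
  moreover have "L2pistar \<beta> d v (\<lambda>s. \<psi> s - phi s) = L2pistar \<beta> d v (\<lambda>s. c / gibbs s)"
    unfolding L2pistar_def using c by (intro set_integrable_cong) auto
  ultimately have "c = 0" using not_L2pistar_inverse_gibbs by blast
  then show ?thesis using c assms(3) by simp
qed

end

theorem propositionC1: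
  fixes d :: nat and \<beta> :: real and v v' :: "real \<Rightarrow> real"
  assumes "d \<ge> 2" and "\<beta> > 0"
    and "\<And>r. r > 0 \<Longrightarrow> (v has_real_derivative v' r) (at r)"
    and "continuous_on {0<..} v'"
    and "Limsup (at_right 0) (\<lambda>r. ereal (v' r)) < \<infinity>"
    and "filterlim (\<lambda>r. v' r / r) at_top at_top"
  shows "\<exists>\<phi>. is_solution \<beta> d v v' \<phi> \<and> L2pistar \<beta> d v \<phi>
            \<and> (\<forall>\<Phi>. (\<forall>r>0. (\<Phi> has_real_derivative \<phi> r) (at r)) \<longrightarrow> L2pistar \<beta> d v \<Phi>)
            \<and> (\<forall>\<psi>. is_solution \<beta> d v v' \<psi> \<and> L2pistar \<beta> d v \<psi>
                   \<and> (\<forall>\<Psi>. (\<forall>r>0. (\<Psi> has_real_derivative \<psi> r) (at r)) \<longrightarrow> L2pistar \<beta> d v \<Psi>)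
                   \<longrightarrow> (\<forall>r>0. \<psi> r = \<phi> r))
            \<and> (\<phi> \<longlongrightarrow> 0) (at_right 0)
            \<and> (\<phi> \<longlongrightarrow> 0) at_top"
proof -
  interpret confining_potential d \<beta> v v' using assms by unfold_locales
  show ?thesis
    using is_solution_phi L2pistar_phi L2pistar_primitive_phi solution_unique
      phi_tendsto_0_at_right phi_tendsto_0_at_top
    by blast
qed

end
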